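(* There are ring homomorphisms $$\mathrm{B}(\mathcal{Q})\longrightarrow\mathrm{B}(\mathcal{R})\longrightarrow\mathrm{B}(\mathcal{Q})$$ whose composition is the identity of $\mathrm{B}(\mathcal{Q})$.
   Context: A rack is a set $R$ with a binary operation $\rhd$ such that every left multiplication $\ell_a\colon b\mapsto a\rhd b$ is a bijection and $a\rhd(b\rhd c)=(a\rhd b)\rhd(a\rhd c)$ for all $a,b,c$; a quandle is a rack with $a\rhd a=a$ for all $a$. A subrack is a subset $S$ with $\ell_s(S)=S$ for all $s\in S$; a decomposition of $R$ into $S$ and $T$ means $S,T$ are disjoint subracks (possibly empty) with $S\cup T=R$. The Burnside ring of finite racks $\mathrm{B}(\mathcal{R})$ is the abelian group generated by symbols $b(R)$, one for each finite rack $R$, subject to $b(R_1)=b(R_2)$ whenever $R_1\cong R_2$ and $b(R)=b(S)+b(T)$ whenever $R$ decomposes into $S$ and $T$, with ring structure $b(R)b(R')=b(R\times R')$ (cartesian product, componentwise operation) and unit the class of the singleton. The Burnside ring of finite quandles $\mathrm{B}(\mathcal{Q})$ is defined in the same way using only finite quandles. *)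

theory Defs
  imports "HOL-Algebra.Ring" "HOL-Library.Nat_Bijection"
begin

text \<open>A (concrete) finite rack is represented by a finite carrier A of naturals
  together with an operation on nat, normalised to be 0 outside A x A.
  Every finite rack is isomorphic to such a representation.\<close>

type_synonym rk = "nat set \<times> (nat \<Rightarrow> nat \<Rightarrow> nat)"

definition rack_on :: "nat set \<Rightarrow> (nat \<Rightarrow> nat \<Rightarrow> nat) \<Rightarrow> bool" where
  "rack_on A op \<longleftrightarrow>
     (\<forall>a\<in>A. bij_betw (op a) A A) \<and>
     (\<forall>a\<in>A. \<forall>b\<in>A. \<forall>c\<in>A. op a (op b c) = op (op a b) (op a c))"

definition quandle_on :: "nat set \<Rightarrow> (nat \<Rightarrow> nat \<Rightarrow> nat) \<Rightarrow> bool" where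
  "quandle_on A op \<longleftrightarrow> rack_on A op \<and> (\<forall>a\<in>A. op a a = a)"

definition normalised :: "rk \<Rightarrow> bool" where
  "normalised R \<longleftrightarrow> (\<forall>a b. (a \<notin> fst R \<or> b \<notin> fst R) \<longrightarrow> snd R a b = 0)"

definition FinRacks :: "rk set" where
  "FinRacks = {R. finite (fst R) \<and> rack_on (fst R) (snd R) \<and> normalised R}"

definition FinQuandles :: "rk set" where
  "FinQuandles = {R. finite (fst R) \<and> quandle_on (fst R) (snd R) \<and> normalised R}"

definition rack_iso :: "rk \<Rightarrow> rk \<Rightarrow> bool" where
  "rack_iso R R' \<longleftrightarrow> (\<exists>h. bij_betw h (fst R) (fst R') \<and>
     (\<forall>a\<in>fst R. \<forall>b\<in>fst R. h (snd R a b) = snd R' (h a) (h b)))"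

definition subrack :: "rk \<Rightarrow> nat set \<Rightarrow> bool" where
  "subrack R S \<longleftrightarrow> S \<subseteq> fst R \<and> (\<forall>s\<in>S. snd R s ` S = S)"

definition restr :: "rk \<Rightarrow> nat set \<Rightarrow> rk" where
  "restr R S = (S, \<lambda>a b. if a \<in> S \<and> b \<in> S then snd R a b else 0)"

definition rack_prod :: "rk \<Rightarrow> rk \<Rightarrow> rk" where
  "rack_prod R R' = (prod_encode ` (fst R \<times> fst R'),
     \<lambda>x y. if x \<in> prod_encode ` (fst R \<times> fst R') \<and> y \<in> prod_encode ` (fst R \<times> fst R')
           then prod_encode (snd R (fst (prod_decode x)) (fst (prod_decode y)),
                             snd R' (snd (prod_decode x)) (snd (prod_decode y)))
           else 0)"

definition unit_rack :: rk where
  "unit_rack = ({0}, \<lambda>_ _. 0)"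

definition free_ab :: "rk set \<Rightarrow> (rk \<Rightarrow> int) set" where
  "free_ab C = {f. finite {x. f x \<noteq> 0} \<and> {x. f x \<noteq> 0} \<subseteq> C}"

definition gen :: "rk \<Rightarrow> rk \<Rightarrow> int" where
  "gen x = (\<lambda>y. if y = x then 1 else 0)"

definition fadd :: "(rk \<Rightarrow> int) \<Rightarrow> (rk \<Rightarrow> int) \<Rightarrow> rk \<Rightarrow> int" where
  "fadd f g = (\<lambda>x. f x + g x)"

definition fsub :: "(rk \<Rightarrow> int) \<Rightarrow> (rk \<Rightarrow> int) \<Rightarrow> rk \<Rightarrow> int" where
  "fsub f g = (\<lambda>x. f x - g x)"

definition conv :: "(rk \<Rightarrow> int) \<Rightarrow> (rk \<Rightarrow> int) \<Rightarrow> rk \<Rightarrow> int" where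
  "conv f g = (\<lambda>z. \<Sum>x\<in>{x. f x \<noteq> 0}. \<Sum>y\<in>{y. g y \<noteq> 0}.
                   if rack_prod x y = z then f x * g y else 0)"

definition rels :: "rk set \<Rightarrow> (rk \<Rightarrow> int) set" where
  "rels C = {fsub (gen x) (gen y) | x y. x \<in> C \<and> y \<in> C \<and> rack_iso x y}
          \<union> {fsub (fsub (gen R) (gen (restr R S))) (gen (restr R (fst R - S))) | R S.
               R \<in> C \<and> subrack R S \<and> subrack R (fst R - S)}"

inductive_set relsub :: "rk set \<Rightarrow> (rk \<Rightarrow> int) set" for C where
  zero: "(\<lambda>_. 0) \<in> relsub C"
| plus: "f \<in> relsub C \<Longrightarrow> r \<in> rels C \<Longrightarrow> fadd f r \<in> relsub C"
| minus: "f \<in> relsub C \<Longrightarrow> r \<in> rels C \<Longrightarrow> fsub f r \<in> relsub C"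

definition cls :: "rk set \<Rightarrow> (rk \<Rightarrow> int) \<Rightarrow> (rk \<Rightarrow> int) set" where
  "cls C f = {g \<in> free_ab C. fsub f g \<in> relsub C}"

definition Burnside :: "rk set \<Rightarrow> (rk \<Rightarrow> int) set ring" where
  "Burnside C = \<lparr>carrier = cls C ` free_ab C,
     mult = (\<lambda>X Y. cls C (conv (SOME f. f \<in> X) (SOME g. g \<in> Y))),
     one = cls C (gen unit_rack),
     zero = cls C (\<lambda>_. 0),
     add = (\<lambda>X Y. cls C (fadd (SOME f. f \<in> X) (SOME g. g \<in> Y)))\<rparr>"

abbreviation "B_R \<equiv> Burnside FinRacks"
abbreviation "B_Q \<equiv> Burnside FinQuandles"

end

theory Submission
  imports Defs "HOL-Library.Function_Algebras"
begin

text \<open>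
  Both maps come from maps on isomorphism classes of finite racks, extended linearly to the
  free abelian groups. For \<open>\<phi>\<close> this is the inclusion of quandles into racks. For \<open>\<psi>\<close> it
  sends a rack \<open>R\<close> to its subquandle of idempotents \<open>{a. a \<rhd> a = a}\<close>, which is closed
  because \<open>a \<rhd> (b \<rhd> b) = (a \<rhd> b) \<rhd> (a \<rhd> b)\<close>. Passing to idempotents respects
  isomorphisms, decompositions (the idempotents of \<open>S \<union> T\<close> are those of \<open>S\<close> and of \<open>T\<close>)
  and products, so it maps relations to relations and induces a ring homomorphism; the same
  holds, trivially, for the inclusion. Since a quandle is its own subquandle of idempotents,
  \<open>\<psi> \<circ> \<phi>\<close> is the identity.
\<close>

section \<open>Finitely supported functions and linear extension\<close>

definition supp :: "('a \<Rightarrow> int) \<Rightarrow> 'a set" where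
  "supp f = {x. f x \<noteq> 0}"

definition fin_supp :: "('a \<Rightarrow> int) \<Rightarrow> bool" where
  "fin_supp f \<longleftrightarrow> finite (supp f)"

definition smult :: "int \<Rightarrow> ('a \<Rightarrow> int) \<Rightarrow> 'a \<Rightarrow> int" where
  "smult c f = (\<lambda>x. c * f x)"

definition lin_ext :: "('a \<Rightarrow> 'b \<Rightarrow> int) \<Rightarrow> ('a \<Rightarrow> int) \<Rightarrow> 'b \<Rightarrow> int" where
  "lin_ext T f = (\<Sum>x\<in>supp f. smult (f x) (T x))"

definition additive :: "(('a \<Rightarrow> int) \<Rightarrow> 'b \<Rightarrow> int) \<Rightarrow> bool" where
  "additive L \<longleftrightarrow> (\<forall>f g. fin_supp f \<longrightarrow> fin_supp g \<longrightarrow> L (f + g) = L f + L g)"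

lemma smult_apply [simp]: "smult c f x = c * f x"
  by (simp add: smult_def)

lemma smult_zero [simp]: "smult 0 f = 0"
  by (simp add: smult_def fun_eq_iff)

lemma smult_one [simp]: "smult 1 f = f"
  by (simp add: smult_def)

lemma sum_fun_apply: "(\<Sum>i\<in>A. F i) x = (\<Sum>i\<in>A. F i x)"
  by (induction A rule: infinite_finite_induct) auto

lemma fadd_eq_plus: "fadd f g = f + g"
  by (simp add: fadd_def fun_eq_iff)

lemma fsub_eq_minus: "fsub f g = f - g"
  by (simp add: fsub_def fun_eq_iff)

lemma free_ab_iff: "f \<in> free_ab C \<longleftrightarrow> fin_supp f \<and> supp f \<subseteq> C"
  by (simp add: free_ab_def fin_supp_def supp_def)

lemma supp_gen [simp]: "supp (gen x) = {x}"
  by (auto simp: supp_def gen_def)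

lemma fin_supp_zero [simp]: "fin_supp 0"
  by (simp add: fin_supp_def supp_def)

lemma fin_supp_gen [simp]: "fin_supp (gen x)"
  by (simp add: fin_supp_def)

lemma supp_add: "supp (f + g) \<subseteq> supp f \<union> supp g"
  by (auto simp: supp_def)

lemma fin_supp_add [simp]: "fin_supp f \<Longrightarrow> fin_supp g \<Longrightarrow> fin_supp (f + g)"
  unfolding fin_supp_def using supp_add by (rule finite_subset) simp

lemma fin_supp_uminus [simp]: "fin_supp (- f) \<longleftrightarrow> fin_supp f"
  by (simp add: fin_supp_def supp_def)

lemma fin_supp_diff [simp]: "fin_supp f \<Longrightarrow> fin_supp g \<Longrightarrow> fin_supp (f - g)"
  using fin_supp_add[of f "- g"] by simp

lemma free_ab_add: "f \<in> free_ab C \<Longrightarrow> g \<in> free_ab C \<Longrightarrow> f + g \<in> free_ab C"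
  using supp_add[of f g] by (auto simp: free_ab_iff)

lemma fin_supp_smult [simp]: "fin_supp f \<Longrightarrow> fin_supp (smult c f)"
  unfolding fin_supp_def by (rule finite_subset[of _ "supp f"]) (auto simp: supp_def smult_def)

lemma fin_supp_sum: "(\<And>i. i \<in> A \<Longrightarrow> fin_supp (h i)) \<Longrightarrow> fin_supp (\<Sum>i\<in>A. h i)"
  by (induction A rule: infinite_finite_induct) auto

lemma fin_supp_lin_ext [simp]: "(\<And>x. fin_supp (T x)) \<Longrightarrow> fin_supp (lin_ext T f)"
  unfolding lin_ext_def by (rule fin_supp_sum) auto

lemma supp_lin_ext: "supp (lin_ext T f) \<subseteq> (\<Union>x\<in>supp f. supp (T x))"
proof
  fix y assume "y \<in> supp (lin_ext T f)"
  then have "lin_ext T f y \<noteq> 0" by (simp add: supp_def)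
  then have "(\<Sum>x\<in>supp f. f x * T x y) \<noteq> 0" by (simp add: lin_ext_def sum_fun_apply)
  then obtain x where "x \<in> supp f" "T x y \<noteq> 0"
    by (metis (no_types, lifting) mult_zero_right sum.neutral)
  then show "y \<in> (\<Union>x\<in>supp f. supp (T x))" by (auto simp: supp_def)
qed

lemma lin_ext_superset:
  assumes "finite A" "supp f \<subseteq> A"
  shows "lin_ext T f = (\<Sum>x\<in>A. smult (f x) (T x))"
  unfolding lin_ext_def by (rule sum.mono_neutral_left) (use assms in \<open>auto simp: supp_def\<close>)

lemma lin_ext_gen [simp]: "lin_ext T (gen x) = T x"
  by (simp add: lin_ext_def) (simp add: gen_def)

lemma lin_ext_cong: "(\<And>x. x \<in> supp f \<Longrightarrow> T x = T' x) \<Longrightarrow> lin_ext T f = lin_ext T' f"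
  by (simp add: lin_ext_def)

lemma additive_lin_ext: "additive (lin_ext T)"
  unfolding additive_def
proof (intro allI impI)
  fix f g :: "'a \<Rightarrow> int" assume "fin_supp f" "fin_supp g"
  then have A: "finite (supp f \<union> supp g)" by (simp add: fin_supp_def)
  show "lin_ext T (f + g) = lin_ext T f + lin_ext T g"
    using supp_add[of f g]
    by (simp add: lin_ext_superset[OF A] smult_def sum.distrib distrib_right fun_eq_iff sum_fun_apply)
qed

lemma additive_zero: "additive L \<Longrightarrow> L 0 = 0"
  unfolding additive_def by (metis add_cancel_right_right add_0 fin_supp_zero)

lemma additive_diff: "additive L \<Longrightarrow> fin_supp f \<Longrightarrow> fin_supp g \<Longrightarrow> L (f - g) = L f - L g"
  unfolding additive_def by (metis diff_add_cancel eq_diff_eq fin_supp_diff)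

lemma additive_sum:
  "additive L \<Longrightarrow> (\<And>i. i \<in> A \<Longrightarrow> fin_supp (h i)) \<Longrightarrow> L (\<Sum>i\<in>A. h i) = (\<Sum>i\<in>A. L (h i))"
  by (induction A rule: infinite_finite_induct) (auto simp: additive_zero additive_def fin_supp_sum)

lemma lin_ext_smult:
  assumes "fin_supp f"
  shows "lin_ext T (smult c f) = smult c (lin_ext T f)"
proof -
  have "finite (supp f)" "supp (smult c f) \<subseteq> supp f"
    using assms by (auto simp: fin_supp_def supp_def)
  then show ?thesis
    by (simp add: lin_ext_superset[of "supp f"] lin_ext_def[of T f] fun_eq_iff sum_fun_apply
        sum_distrib_left mult.assoc)
qed

lemma lin_ext_lin_ext:
  assumes "fin_supp f" "\<And>x. fin_supp (S x)"
  shows "lin_ext T (lin_ext S f) = lin_ext (\<lambda>x. lin_ext T (S x)) f"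
  using assms by (simp add: lin_ext_def[of S] additive_sum[OF additive_lin_ext] lin_ext_smult)
    (simp add: lin_ext_def)

lemma lin_ext_gen_id: "fin_supp f \<Longrightarrow> lin_ext gen f = f"
  by (auto simp: lin_ext_def fun_eq_iff sum_fun_apply smult_def gen_def fin_supp_def supp_def
      if_distrib[of "\<lambda>t. _ * t"] cong: if_cong)

section \<open>The subgroup of relations\<close>

definition decomposes :: "rk \<Rightarrow> nat set \<Rightarrow> bool" where
  "decomposes R S \<longleftrightarrow> subrack R S \<and> subrack R (fst R - S)"

definition decomp_rel :: "rk \<Rightarrow> nat set \<Rightarrow> rk \<Rightarrow> int" where
  "decomp_rel R S = gen R - gen (restr R S) - gen (restr R (fst R - S))"

lemma rels_isoI: "x \<in> C \<Longrightarrow> y \<in> C \<Longrightarrow> rack_iso x y \<Longrightarrow> gen x - gen y \<in> rels C"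
  unfolding rels_def fsub_eq_minus by blast

lemma rels_decompI: "R \<in> C \<Longrightarrow> decomposes R S \<Longrightarrow> decomp_rel R S \<in> rels C"
  unfolding rels_def fsub_eq_minus decomp_rel_def decomposes_def by blast

lemma relsE:
  assumes "r \<in> rels C"
  obtains (iso) x y where "r = gen x - gen y" "x \<in> C" "y \<in> C" "rack_iso x y"
    | (decomp) R S where "r = decomp_rel R S" "R \<in> C" "decomposes R S"
  using assms unfolding rels_def fsub_eq_minus decomp_rel_def decomposes_def by blast

lemma fin_supp_rels: "r \<in> rels C \<Longrightarrow> fin_supp r"
  by (erule relsE) (simp_all add: decomp_rel_def)

lemma lambda_zero [simp]: "(\<lambda>_. 0) = 0"
  by (simp add: zero_fun_def)

lemma relsub_zero [simp]: "0 \<in> relsub C"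
  using relsub.zero by simp

lemma relsub_rels: "r \<in> rels C \<Longrightarrow> r \<in> relsub C"
  using relsub.plus[OF relsub.zero] by (simp add: fadd_eq_plus)

lemma relsub_add:
  assumes "f \<in> relsub C" "g \<in> relsub C"
  shows "f + g \<in> relsub C"
  using assms(2)
proof (induction g rule: relsub.induct)
  case (plus g r)
  have "f + fadd g r = fadd (f + g) r" by (simp add: fadd_eq_plus add.assoc)
  then show ?case using plus relsub.plus by metis
next
  case (minus g r)
  have "f + fsub g r = fsub (f + g) r" by (simp add: fsub_eq_minus add_diff_eq)
  then show ?case using minus relsub.minus by metis
qed (simp add: assms(1))

lemma relsub_uminus: "f \<in> relsub C \<Longrightarrow> - f \<in> relsub C"
proof (induction f rule: relsub.induct)
  case (plus f r)
  have "- fadd f r = fsub (- f) r" by (simp add: fadd_eq_plus fsub_eq_minus)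
  then show ?case using plus relsub.minus by metis
next
  case (minus f r)
  have "- fsub f r = fadd (- f) r" by (simp add: fadd_eq_plus fsub_eq_minus)
  then show ?case using minus relsub.plus by metis
qed simp

lemma relsub_diff: "f \<in> relsub C \<Longrightarrow> g \<in> relsub C \<Longrightarrow> f - g \<in> relsub C"
  using relsub_add[OF _ relsub_uminus] by (metis diff_conv_add_uminus)

lemma relsub_smult: "f \<in> relsub C \<Longrightarrow> smult c f \<in> relsub C"
proof (induction c rule: int_induct[where k = 0])
  case (step1 i)
  have "smult (i + 1) f = smult i f + f" by (simp add: fun_eq_iff algebra_simps)
  then show ?case using step1 relsub_add by metis
next
  case (step2 i)
  have "smult (i - 1) f = smult i f - f" by (simp add: fun_eq_iff algebra_simps)
  then show ?case using step2 relsub_diff by metis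
qed simp

lemma relsub_sum: "(\<And>i. i \<in> A \<Longrightarrow> h i \<in> relsub C) \<Longrightarrow> (\<Sum>i\<in>A. h i) \<in> relsub C"
  by (induction A rule: infinite_finite_induct) (auto intro: relsub_add)

lemma relsub_lin_ext: "(\<And>x. x \<in> supp f \<Longrightarrow> T x \<in> relsub C) \<Longrightarrow> lin_ext T f \<in> relsub C"
  unfolding lin_ext_def by (auto intro!: relsub_sum relsub_smult)

lemma fin_supp_relsub: "f \<in> relsub C \<Longrightarrow> fin_supp f"
  by (induction f rule: relsub.induct) (simp_all only: fadd_eq_plus fsub_eq_minus fin_supp_rels
      fin_supp_add fin_supp_diff fin_supp_zero lambda_zero)

lemma relsub_mono: "C \<subseteq> C' \<Longrightarrow> relsub C \<subseteq> relsub C'"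
proof
  assume "C \<subseteq> C'"
  then have "rels C \<subseteq> rels C'" unfolding rels_def by blast
  show "f \<in> relsub C'" if "f \<in> relsub C" for f
    using that by induction (use \<open>rels C \<subseteq> rels C'\<close> in \<open>auto intro: relsub.intros\<close>)
qed

lemma relsub_additive_image:
  assumes L: "additive L" and rels: "\<And>r. r \<in> rels C \<Longrightarrow> L r \<in> relsub C'"
    and f: "f \<in> relsub C"
  shows "L f \<in> relsub C'"
  using f
proof (induction f rule: relsub.induct)
  case zero
  then show ?case using additive_zero[OF L] by simp
next
  case (plus f r)
  then have "L (fadd f r) = L f + L r"
    using L fin_supp_relsub fin_supp_rels by (simp add: fadd_eq_plus additive_def)
  then show ?case using plus rels relsub_add by metis
next
  case (minus f r)
  then have "L (fsub f r) = L f - L r"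
    using fin_supp_relsub fin_supp_rels by (simp add: fsub_eq_minus additive_diff[OF L])
  then show ?case using minus rels relsub_diff by metis
qed

section \<open>Products and restrictions of racks\<close>

lemma FinRacks_iff:
  "R \<in> FinRacks \<longleftrightarrow> finite (fst R) \<and> rack_on (fst R) (snd R) \<and> normalised R"
  by (simp add: FinRacks_def)

lemma FinQuandles_iff:
  "R \<in> FinQuandles \<longleftrightarrow> R \<in> FinRacks \<and> (\<forall>a\<in>fst R. snd R a a = a)"
  by (auto simp: FinRacks_def FinQuandles_def quandle_on_def)

lemma rack_on_closed: "rack_on A op \<Longrightarrow> a \<in> A \<Longrightarrow> b \<in> A \<Longrightarrow> op a b \<in> A"
  unfolding rack_on_def by (meson bij_betw_apply)

lemma rack_on_inj: "rack_on A op \<Longrightarrow> a \<in> A \<Longrightarrow> inj_on (op a) A"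
  unfolding rack_on_def by (meson bij_betw_imp_inj_on)

lemma rack_on_distrib:
  "rack_on A op \<Longrightarrow> a \<in> A \<Longrightarrow> b \<in> A \<Longrightarrow> c \<in> A \<Longrightarrow> op a (op b c) = op (op a b) (op a c)"
  unfolding rack_on_def by blast

lemma fst_rack_prod [simp]: "fst (rack_prod R R') = prod_encode ` (fst R \<times> fst R')"
  by (simp add: rack_prod_def)

lemma snd_rack_prod [simp]:
  "a \<in> fst R \<Longrightarrow> b \<in> fst R' \<Longrightarrow> c \<in> fst R \<Longrightarrow> d \<in> fst R' \<Longrightarrow>
    snd (rack_prod R R') (prod_encode (a, b)) (prod_encode (c, d)) = prod_encode (snd R a c, snd R' b d)"
  by (auto simp: rack_prod_def)

lemma normalised_rack_prod: "normalised (rack_prod R R')"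
  by (auto simp: normalised_def rack_prod_def)

lemma bij_betw_prod_encode_map:
  assumes "bij_betw f A A'" "bij_betw g B B'"
  shows "bij_betw (\<lambda>u. prod_encode (map_prod f g (prod_decode u)))
           (prod_encode ` (A \<times> B)) (prod_encode ` (A' \<times> B'))"
proof -
  have "bij_betw prod_decode (prod_encode ` (A \<times> B)) (A \<times> B)"
    by (rule bij_betw_imageI) (auto simp: inj_on_def image_image)
  moreover have "bij_betw prod_encode (A' \<times> B') (prod_encode ` (A' \<times> B'))"
    by (rule bij_betw_imageI) (auto intro: inj_on_subset[OF inj_prod_encode])
  ultimately show ?thesis
    using bij_betw_trans[OF _ bij_betw_trans[OF bij_betw_map_prod[OF assms]]]
    by (simp add: comp_def)
qed

lemma rack_on_rack_prod:
  assumes R: "rack_on (fst R) (snd R)" and R': "rack_on (fst R') (snd R')"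
  shows "rack_on (fst (rack_prod R R')) (snd (rack_prod R R'))"
proof -
  let ?op = "snd (rack_prod R R')"
  have "bij_betw (?op (prod_encode (a, b))) (fst (rack_prod R R')) (fst (rack_prod R R'))"
    if "a \<in> fst R" "b \<in> fst R'" for a b
  proof -
    have "bij_betw (\<lambda>u. prod_encode (map_prod (snd R a) (snd R' b) (prod_decode u)))
        (fst (rack_prod R R')) (fst (rack_prod R R'))"
      using R R' that by (auto simp: rack_on_def intro!: bij_betw_prod_encode_map)
    then show ?thesis using that by (auto elim!: bij_betw_cong[THEN iffD1, rotated])
  qed
  moreover have "?op u (?op v w) = ?op (?op u v) (?op u w)"
    if uvw: "u \<in> fst (rack_prod R R')" "v \<in> fst (rack_prod R R')" "w \<in> fst (rack_prod R R')"
    for u v w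
  proof -
    obtain a b c d e f where
      encoded: "u = prod_encode (a, b)" "v = prod_encode (c, d)" "w = prod_encode (e, f)" and
      in_R: "a \<in> fst R" "c \<in> fst R" "e \<in> fst R" and
      in_R': "b \<in> fst R'" "d \<in> fst R'" "f \<in> fst R'"
      using uvw unfolding fst_rack_prod by blast
    have "snd R a (snd R c e) = snd R (snd R a c) (snd R a e)"
      using in_R by (intro rack_on_distrib[OF R])
    moreover have "snd R' b (snd R' d f) = snd R' (snd R' b d) (snd R' b f)"
      using in_R' by (intro rack_on_distrib[OF R'])
    ultimately show ?thesis
      using encoded in_R in_R' by (simp add: rack_on_closed[OF R] rack_on_closed[OF R'])
  qed
  ultimately show ?thesis unfolding rack_on_def fst_rack_prod by blast
qed

lemma rack_iso_refl: "rack_iso R R"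
  unfolding rack_iso_def by (auto intro: exI[of _ id])

lemma rack_iso_rack_prod:
  assumes "rack_iso R R'" "rack_iso Y Y'"
  shows "rack_iso (rack_prod R Y) (rack_prod R' Y')"
proof -
  obtain h where h: "bij_betw h (fst R) (fst R')"
    "\<forall>a\<in>fst R. \<forall>b\<in>fst R. h (snd R a b) = snd R' (h a) (h b)"
    using assms(1) by (auto simp: rack_iso_def)
  obtain k where k: "bij_betw k (fst Y) (fst Y')"
    "\<forall>a\<in>fst Y. \<forall>b\<in>fst Y. k (snd Y a b) = snd Y' (k a) (k b)"
    using assms(2) by (auto simp: rack_iso_def)
  let ?hk = "\<lambda>u. prod_encode (map_prod h k (prod_decode u))"
  have "bij_betw ?hk (fst (rack_prod R Y)) (fst (rack_prod R' Y'))"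
    using bij_betw_prod_encode_map[OF h(1) k(1)] by simp
  moreover have "?hk (snd (rack_prod R Y) u v) = snd (rack_prod R' Y') (?hk u) (?hk v)"
    if uv: "u \<in> fst (rack_prod R Y)" "v \<in> fst (rack_prod R Y)" for u v
  proof -
    obtain a b c d where "u = prod_encode (a, b)" "v = prod_encode (c, d)"
      and "a \<in> fst R" "c \<in> fst R" "b \<in> fst Y" "d \<in> fst Y"
      using uv unfolding fst_rack_prod by blast
    with h k show ?thesis
      by (simp add: bij_betw_apply rack_on_closed)
  qed
  ultimately show ?thesis unfolding rack_iso_def by blast
qed

lemma fst_restr [simp]: "fst (restr R S) = S"
  by (simp add: restr_def)

lemma snd_restr [simp]: "a \<in> S \<Longrightarrow> b \<in> S \<Longrightarrow> snd (restr R S) a b = snd R a b"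
  by (simp add: restr_def)

lemma normalised_restr: "normalised (restr R S)"
  by (auto simp: normalised_def restr_def)

lemma restr_restr: "T \<subseteq> S \<Longrightarrow> restr (restr R S) T = restr R T"
  by (auto simp: restr_def fun_eq_iff)

lemma restr_whole: "normalised R \<Longrightarrow> restr R (fst R) = R"
  by (cases R) (auto simp: restr_def normalised_def fun_eq_iff)

lemma restr_rack_prod:
  assumes "S \<subseteq> fst R" "T \<subseteq> fst Y"
  shows "rack_prod (restr R S) (restr Y T) = restr (rack_prod R Y) (prod_encode ` (S \<times> T))"
proof -
  let ?ST = "prod_encode ` (S \<times> T)"
  have "snd (rack_prod (restr R S) (restr Y T)) u v = snd (restr (rack_prod R Y) ?ST) u v" for u v
  proof (cases "u \<in> ?ST \<and> v \<in> ?ST")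
    case True
    then obtain a b c d where "u = prod_encode (a, b)" "v = prod_encode (c, d)"
      "a \<in> S" "b \<in> T" "c \<in> S" "d \<in> T" by blast
    then show ?thesis using assms by (auto simp: rack_prod_def restr_def)
  qed (auto simp: rack_prod_def restr_def)
  then show ?thesis by (simp add: prod_eq_iff fun_eq_iff)
qed

lemma subrack_whole: "rack_on (fst R) (snd R) \<Longrightarrow> subrack R (fst R)"
  unfolding subrack_def rack_on_def by (simp add: bij_betw_imp_surj_on)

lemma subrack_rack_prod:
  assumes S: "subrack R S" and T: "subrack Y T"
  shows "subrack (rack_prod R Y) (prod_encode ` (S \<times> T))"
proof -
  have "snd (rack_prod R Y) (prod_encode (a, b)) ` prod_encode ` (S \<times> T) = prod_encode ` (S \<times> T)"
    if "a \<in> S" "b \<in> T" for a b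
  proof -
    have "snd (rack_prod R Y) (prod_encode (a, b)) ` prod_encode ` (S \<times> T) =
        prod_encode ` map_prod (snd R a) (snd Y b) ` (S \<times> T)"
      unfolding image_image
    proof (rule image_cong)
      fix u assume "u \<in> S \<times> T"
      then show "snd (rack_prod R Y) (prod_encode (a, b)) (prod_encode u) =
          prod_encode (map_prod (snd R a) (snd Y b) u)"
        using that S T by (auto simp: subrack_def subset_iff)
    qed (simp add: image_image)
    also have "\<dots> = prod_encode ` (S \<times> T)"
      using that S T by (simp add: subrack_def map_prod_surj_on)
    finally show ?thesis .
  qed
  then show ?thesis using S T by (auto simp: subrack_def)
qed

section \<open>Products on the free abelian group\<close>

definition product_closed :: "rk set \<Rightarrow> bool" where
  "product_closed C \<longleftrightarrow> C \<subseteq> FinRacks \<and> (\<forall>x\<in>C. \<forall>y\<in>C. rack_prod x y \<in> C)"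

lemma product_closed_FinRacks: "product_closed FinRacks"
proof -
  have "rack_prod x y \<in> FinRacks" if "x \<in> FinRacks" "y \<in> FinRacks" for x y
    using that rack_on_rack_prod[of x y] by (simp add: FinRacks_iff normalised_rack_prod)
  then show ?thesis by (simp add: product_closed_def)
qed

lemma product_closed_FinQuandles: "product_closed FinQuandles"
proof -
  have "rack_prod x y \<in> FinQuandles" if "x \<in> FinQuandles" "y \<in> FinQuandles" for x y
    using that product_closed_FinRacks by (auto simp: product_closed_def FinQuandles_iff)
  then show ?thesis by (auto simp: product_closed_def FinQuandles_iff)
qed

lemma conv_lin_ext_left: "conv f g = lin_ext (\<lambda>x. lin_ext (\<lambda>y. gen (rack_prod x y)) g) f"
  unfolding conv_def lin_ext_def
  by (auto simp: fun_eq_iff sum_fun_apply gen_def supp_def sum_distrib_left intro!: sum.cong)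

lemma conv_lin_ext_right: "conv f g = lin_ext (\<lambda>y. lin_ext (\<lambda>x. gen (rack_prod x y)) f) g"
  unfolding conv_def lin_ext_def
  by (subst sum.swap) (auto simp: fun_eq_iff sum_fun_apply gen_def supp_def sum_distrib_left intro!: sum.cong)

lemma conv_gen_left: "conv (gen x) g = lin_ext (\<lambda>y. gen (rack_prod x y)) g"
  by (simp add: conv_lin_ext_left)

lemma conv_gen_right: "conv f (gen y) = lin_ext (\<lambda>x. gen (rack_prod x y)) f"
  by (simp add: conv_lin_ext_right)

lemma additive_conv_left: "additive (\<lambda>f. conv f g)"
  unfolding conv_lin_ext_left by (rule additive_lin_ext)

lemma additive_conv_right: "additive (conv f)"
  unfolding conv_lin_ext_right by (rule additive_lin_ext)

lemma fin_supp_conv [simp]: "fin_supp (conv f g)"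
  by (simp add: conv_lin_ext_left)

lemma supp_conv: "supp (conv f g) \<subseteq> (\<Union>x\<in>supp f. \<Union>y\<in>supp g. {rack_prod x y})"
proof -
  have "supp (conv f g) \<subseteq> (\<Union>x\<in>supp f. supp (lin_ext (\<lambda>y. gen (rack_prod x y)) g))"
    unfolding conv_lin_ext_left by (rule supp_lin_ext)
  also have "\<dots> \<subseteq> (\<Union>x\<in>supp f. \<Union>y\<in>supp g. {rack_prod x y})"
    by (intro UN_mono order_refl subset_trans[OF supp_lin_ext]) simp
  finally show ?thesis .
qed

lemma conv_free_ab:
  assumes "product_closed C" "f \<in> free_ab C" "g \<in> free_ab C"
  shows "conv f g \<in> free_ab C"
proof -
  have "rack_prod x y \<in> C" if "x \<in> supp f" "y \<in> supp g" for x y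
    using assms that unfolding free_ab_iff product_closed_def by blast
  then have "supp (conv f g) \<subseteq> C" using supp_conv[of f g] by blast
  then show ?thesis by (simp add: free_ab_iff)
qed

lemma fst_rack_prod_Diff:
  "fst (rack_prod R Y) - prod_encode ` (S \<times> fst Y) = prod_encode ` ((fst R - S) \<times> fst Y)"
  "fst (rack_prod Y R) - prod_encode ` (fst Y \<times> S) = prod_encode ` (fst Y \<times> (fst R - S))"
  by auto

lemma decomposes_rack_prod:
  assumes "decomposes R S" "rack_on (fst Y) (snd Y)"
  shows "decomposes (rack_prod R Y) (prod_encode ` (S \<times> fst Y))"
    and "decomposes (rack_prod Y R) (prod_encode ` (fst Y \<times> S))"
  using assms subrack_whole[OF assms(2)]
  by (simp_all add: decomposes_def fst_rack_prod_Diff subrack_rack_prod del: fst_rack_prod)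

lemma conv_decomp_rel_gen:
  assumes "S \<subseteq> fst R" "normalised Y"
  shows "conv (decomp_rel R S) (gen Y) = decomp_rel (rack_prod R Y) (prod_encode ` (S \<times> fst Y))"
    and "conv (gen Y) (decomp_rel R S) = decomp_rel (rack_prod Y R) (prod_encode ` (fst Y \<times> S))"
proof -
  have "rack_prod (restr R S') Y = restr (rack_prod R Y) (prod_encode ` (S' \<times> fst Y))"
    and "rack_prod Y (restr R S') = restr (rack_prod Y R) (prod_encode ` (fst Y \<times> S'))"
    if "S' \<subseteq> fst R" for S'
    using restr_rack_prod[OF that, where Y = Y and T = "fst Y"]
      restr_rack_prod[OF _ that, where R = Y and S = "fst Y"]
    by (simp_all add: restr_whole[OF assms(2)])
  then show "conv (decomp_rel R S) (gen Y) = decomp_rel (rack_prod R Y) (prod_encode ` (S \<times> fst Y))"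
    and "conv (gen Y) (decomp_rel R S) = decomp_rel (rack_prod Y R) (prod_encode ` (fst Y \<times> S))"
    using assms(1)
    by (simp_all add: fst_rack_prod_Diff decomp_rel_def conv_gen_left conv_gen_right
        additive_diff[OF additive_lin_ext] del: fst_rack_prod)
qed

lemma conv_rels_gen:
  assumes C: "product_closed C" and r: "r \<in> rels C" and y: "y \<in> C"
  shows "conv r (gen y) \<in> rels C \<and> conv (gen y) r \<in> rels C"
  using r
proof (cases rule: relsE)
  case (iso x x')
  have "rack_prod x y \<in> C" "rack_prod x' y \<in> C" "rack_prod y x \<in> C" "rack_prod y x' \<in> C"
    using C iso y by (auto simp: product_closed_def)
  moreover have "rack_iso (rack_prod x y) (rack_prod x' y)" "rack_iso (rack_prod y x) (rack_prod y x')"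
    using iso by (simp_all add: rack_iso_rack_prod rack_iso_refl)
  ultimately show ?thesis
    using iso by (simp add: conv_gen_left conv_gen_right additive_diff[OF additive_lin_ext] rels_isoI)
next
  case (decomp R S)
  have "R \<in> FinRacks" "y \<in> FinRacks" using C decomp y by (auto simp: product_closed_def)
  then have "S \<subseteq> fst R" "normalised y" "rack_on (fst y) (snd y)"
    using decomp by (auto simp: FinRacks_iff decomposes_def subrack_def)
  moreover have "rack_prod R y \<in> C" "rack_prod y R \<in> C"
    using C decomp y by (auto simp: product_closed_def)
  ultimately show ?thesis
    using decomp by (simp add: conv_decomp_rel_gen rels_decompI decomposes_rack_prod del: fst_rack_prod)
qed

lemma conv_relsub:
  assumes C: "product_closed C" and r: "r \<in> relsub C" and b: "b \<in> free_ab C"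
  shows "conv r b \<in> relsub C" "conv b r \<in> relsub C"
proof -
  have "conv r b \<in> relsub C \<and> conv b r \<in> relsub C" if r: "r \<in> rels C" for r
  proof -
    have "conv r b = lin_ext (\<lambda>y. conv r (gen y)) b"
      unfolding conv_gen_right by (rule conv_lin_ext_right)
    moreover have "conv b r = lin_ext (\<lambda>y. conv (gen y) r) b"
      unfolding conv_gen_left by (rule conv_lin_ext_left)
    moreover have "conv r (gen y) \<in> relsub C" "conv (gen y) r \<in> relsub C" if "y \<in> supp b" for y
    proof -
      have "y \<in> C" using b that by (auto simp: free_ab_iff)
      then show "conv r (gen y) \<in> relsub C" "conv (gen y) r \<in> relsub C"
        using conv_rels_gen[OF C r] by (simp_all add: relsub_rels)
    qed
    ultimately show ?thesis by (simp add: relsub_lin_ext)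
  qed
  then show "conv r b \<in> relsub C" "conv b r \<in> relsub C"
    using relsub_additive_image[OF additive_conv_left] relsub_additive_image[OF additive_conv_right] r
    by blast+
qed

section \<open>Ring homomorphisms between Burnside rings\<close>

definition rep :: "(rk \<Rightarrow> int) set \<Rightarrow> rk \<Rightarrow> int" where
  "rep X = (SOME f. f \<in> X)"

lemma cls_eqI: "f - g \<in> relsub C \<Longrightarrow> cls C f = cls C g"
proof -
  assume fg: "f - g \<in> relsub C"
  have "f - h \<in> relsub C \<longleftrightarrow> g - h \<in> relsub C" for h
    using relsub_diff[OF _ fg, of "f - h"] relsub_add[OF _ fg, of "g - h"] by (auto simp: algebra_simps)
  then show ?thesis by (simp add: cls_def fsub_eq_minus)
qed

lemma rep_cls: "f \<in> free_ab C \<Longrightarrow> rep (cls C f) \<in> cls C f"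
  unfolding rep_def by (rule someI[of _ f]) (simp add: cls_def fsub_eq_minus)

lemma carrier_Burnside: "carrier (Burnside C) = cls C ` free_ab C"
  by (simp add: Burnside_def)

lemma one_Burnside: "\<one>\<^bsub>Burnside C\<^esub> = cls C (gen unit_rack)"
  by (simp add: Burnside_def)

lemma add_Burnside:
  assumes "f \<in> free_ab C" "g \<in> free_ab C"
  shows "cls C f \<oplus>\<^bsub>Burnside C\<^esub> cls C g = cls C (f + g)"
proof -
  let ?f = "rep (cls C f)" and ?g = "rep (cls C g)"
  have "f - ?f \<in> relsub C" "g - ?g \<in> relsub C"
    using rep_cls[OF assms(1)] rep_cls[OF assms(2)] by (simp_all add: cls_def fsub_eq_minus)
  then have "(f + g) - (?f + ?g) \<in> relsub C"
    using relsub_add by (fastforce simp: algebra_simps)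
  then show ?thesis by (simp add: Burnside_def rep_def fadd_eq_plus cls_eqI)
qed

lemma mult_Burnside:
  assumes C: "product_closed C" and f: "f \<in> free_ab C" and g: "g \<in> free_ab C"
  shows "cls C f \<otimes>\<^bsub>Burnside C\<^esub> cls C g = cls C (conv f g)"
proof -
  let ?f = "rep (cls C f)" and ?g = "rep (cls C g)"
  have f': "?f \<in> free_ab C" "f - ?f \<in> relsub C" and g': "?g \<in> free_ab C" "g - ?g \<in> relsub C"
    using rep_cls[OF f] rep_cls[OF g] by (simp_all add: cls_def fsub_eq_minus)
  have "conv f g - conv ?f ?g = conv (f - ?f) g + conv ?f (g - ?g)"
    using f g f' g' by (simp add: free_ab_iff additive_diff[OF additive_conv_left]
        additive_diff[OF additive_conv_right])
  also have "\<dots> \<in> relsub C"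
    using conv_relsub[OF C] f' g' g by (blast intro: relsub_add)
  finally show ?thesis by (simp add: Burnside_def rep_def cls_eqI)
qed

locale Burnside_map =
  fixes C C' :: "rk set" and L :: "(rk \<Rightarrow> int) \<Rightarrow> rk \<Rightarrow> int"
  assumes product_closed: "product_closed C" "product_closed C'"
    and unit_rack_mem: "unit_rack \<in> C"
    and additive: "additive L"
    and free_ab_image: "f \<in> free_ab C \<Longrightarrow> L f \<in> free_ab C'"
    and rels_image: "r \<in> rels C \<Longrightarrow> L r \<in> relsub C'"
    and conv_image: "f \<in> free_ab C \<Longrightarrow> g \<in> free_ab C \<Longrightarrow> L (conv f g) = conv (L f) (L g)"
    and unit_image: "L (gen unit_rack) = gen unit_rack"
begin

definition induced :: "(rk \<Rightarrow> int) set \<Rightarrow> (rk \<Rightarrow> int) set" where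
  "induced X = cls C' (L (rep X))"

lemma induced_cls:
  assumes f: "f \<in> free_ab C"
  shows "induced (cls C f) = cls C' (L f)"
proof -
  let ?f = "rep (cls C f)"
  have f': "?f \<in> free_ab C" "f - ?f \<in> relsub C"
    using rep_cls[OF f] by (simp_all add: cls_def fsub_eq_minus)
  have "L f - L ?f = L (f - ?f)"
    using f f' by (simp add: free_ab_iff additive_diff[OF additive])
  also have "\<dots> \<in> relsub C'"
    using relsub_additive_image[OF additive rels_image f'(2)] .
  finally show ?thesis unfolding induced_def by (rule cls_eqI[symmetric])
qed

lemma induced_ring_hom: "induced \<in> ring_hom (Burnside C) (Burnside C')"
proof (rule ring_hom_memI)
  fix X assume "X \<in> carrier (Burnside C)"
  then obtain f where "f \<in> free_ab C" "X = cls C f" by (auto simp: carrier_Burnside)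
  then show "induced X \<in> carrier (Burnside C')"
    by (simp add: induced_cls carrier_Burnside free_ab_image)
next
  fix X Y assume "X \<in> carrier (Burnside C)" "Y \<in> carrier (Burnside C)"
  then obtain f g where fg: "f \<in> free_ab C" "g \<in> free_ab C" and XY: "X = cls C f" "Y = cls C g"
    by (auto simp: carrier_Burnside)
  show "induced (X \<otimes>\<^bsub>Burnside C\<^esub> Y) = induced X \<otimes>\<^bsub>Burnside C'\<^esub> induced Y"
    using fg product_closed
    by (simp add: XY mult_Burnside conv_free_ab induced_cls conv_image free_ab_image)
  have "L (f + g) = L f + L g"
    using fg additive by (simp add: additive_def free_ab_iff)
  then show "induced (X \<oplus>\<^bsub>Burnside C\<^esub> Y) = induced X \<oplus>\<^bsub>Burnside C'\<^esub> induced Y"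
    using fg by (simp add: XY add_Burnside free_ab_add induced_cls free_ab_image)
next
  show "induced \<one>\<^bsub>Burnside C\<^esub> = \<one>\<^bsub>Burnside C'\<^esub>"
    using unit_rack_mem by (simp add: one_Burnside induced_cls unit_image free_ab_iff)
qed

end

section \<open>The subquandle of idempotents\<close>

definition idem_set :: "rk \<Rightarrow> nat set" where
  "idem_set R = {a \<in> fst R. snd R a a = a}"

definition idem_part :: "rk \<Rightarrow> rk" where
  "idem_part R = restr R (idem_set R)"

definition idem_push :: "(rk \<Rightarrow> int) \<Rightarrow> rk \<Rightarrow> int" where
  "idem_push = lin_ext (\<lambda>R. gen (idem_part R))"

lemma idem_set_subset: "idem_set R \<subseteq> fst R"
  by (auto simp: idem_set_def)

lemma idem_set_closed:
  assumes R: "rack_on (fst R) (snd R)" and a: "a \<in> idem_set R" and b: "b \<in> idem_set R"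
  shows "snd R a b \<in> idem_set R"
proof -
  have A: "a \<in> fst R" "b \<in> fst R" and "snd R b b = b" using a b by (auto simp: idem_set_def)
  moreover have "snd R a (snd R b b) = snd R (snd R a b) (snd R a b)"
    using A by (rule rack_on_distrib[OF R _ _ A(2)])
  ultimately show ?thesis using rack_on_closed[OF R A] by (simp add: idem_set_def)
qed

lemma restr_FinRacks:
  assumes R: "R \<in> FinRacks" and S: "S \<subseteq> fst R"
    and closed: "\<And>a b. a \<in> S \<Longrightarrow> b \<in> S \<Longrightarrow> snd R a b \<in> S"
  shows "restr R S \<in> FinRacks"
proof -
  have fin: "finite S" and rack: "rack_on (fst R) (snd R)"
    using R S finite_subset by (auto simp: FinRacks_iff)
  have "bij_betw (snd (restr R S) a) S S" if a: "a \<in> S" for a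
  proof -
    have "inj_on (snd R a) S" using a S by (intro inj_on_subset[OF rack_on_inj[OF rack]]) auto
    moreover have "snd R a ` S \<subseteq> S" using closed a by blast
    ultimately have "bij_betw (snd R a) S S" using fin by (simp add: bij_betw_def endo_inj_surj)
    moreover have "snd (restr R S) a b = snd R a b" if "b \<in> S" for b using a that by simp
    ultimately show ?thesis using bij_betw_cong by blast
  qed
  moreover have "snd (restr R S) a (snd (restr R S) b c) =
      snd (restr R S) (snd (restr R S) a b) (snd (restr R S) a c)"
    if abc: "a \<in> S" "b \<in> S" "c \<in> S" for a b c
  proof -
    have "snd R a (snd R b c) = snd R (snd R a b) (snd R a c)"
      using abc S by (intro rack_on_distrib[OF rack]) auto
    then show ?thesis using abc closed by simp
  qed
  ultimately have "rack_on S (snd (restr R S))" unfolding rack_on_def by blast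
  then show ?thesis using fin by (simp add: FinRacks_iff normalised_restr)
qed

lemma idem_part_FinQuandles:
  assumes "R \<in> FinRacks"
  shows "idem_part R \<in> FinQuandles"
proof -
  have "idem_part R \<in> FinRacks"
    unfolding idem_part_def using assms
    by (intro restr_FinRacks idem_set_subset) (auto simp: FinRacks_iff idem_set_closed)
  then show ?thesis by (auto simp: FinQuandles_iff idem_part_def idem_set_def)
qed

lemma idem_part_quandle:
  assumes "R \<in> FinQuandles"
  shows "idem_part R = R"
proof -
  have "idem_set R = fst R" using assms by (auto simp: idem_set_def FinQuandles_iff)
  then show ?thesis using assms by (simp add: idem_part_def restr_whole FinQuandles_iff FinRacks_iff)
qed

lemma rack_iso_restr:
  assumes h: "bij_betw h (fst R) (fst R')" "\<forall>a\<in>fst R. \<forall>b\<in>fst R. h (snd R a b) = snd R' (h a) (h b)"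
    and S: "S \<subseteq> fst R"
  shows "rack_iso (restr R S) (restr R' (h ` S))"
proof -
  have "bij_betw h S (h ` S)"
    using S bij_betw_subset[OF h(1)] by auto
  moreover have "h (snd (restr R S) a b) = snd (restr R' (h ` S)) (h a) (h b)"
    if "a \<in> S" "b \<in> S" for a b
  proof -
    have "a \<in> fst R" "b \<in> fst R" using that S by auto
    then show ?thesis using that h(2) by simp
  qed
  ultimately show ?thesis unfolding rack_iso_def by auto
qed

lemma rack_iso_idem_part:
  assumes R: "rack_on (fst R) (snd R)" and iso: "rack_iso R R'"
  shows "rack_iso (idem_part R) (idem_part R')"
proof -
  obtain h where h: "bij_betw h (fst R) (fst R')"
    "\<forall>a\<in>fst R. \<forall>b\<in>fst R. h (snd R a b) = snd R' (h a) (h b)"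
    using iso by (auto simp: rack_iso_def)
  have idem_iff: "h a \<in> idem_set R' \<longleftrightarrow> a \<in> idem_set R" if a: "a \<in> fst R" for a
  proof -
    have "snd R' (h a) (h a) = h a \<longleftrightarrow> h (snd R a a) = h a" using h(2) a by simp
    also have "\<dots> \<longleftrightarrow> snd R a a = a"
      using inj_on_eq_iff[OF bij_betw_imp_inj_on[OF h(1)] rack_on_closed[OF R a a] a] .
    finally show ?thesis using a bij_betw_apply[OF h(1) a] by (simp add: idem_set_def)
  qed
  have "h ` idem_set R = idem_set R'"
  proof
    show "h ` idem_set R \<subseteq> idem_set R'" using idem_iff idem_set_subset[of R] by blast
    show "idem_set R' \<subseteq> h ` idem_set R"
    proof
      fix y assume y: "y \<in> idem_set R'"
      then obtain a where "a \<in> fst R" "y = h a"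
        using bij_betw_imp_surj_on[OF h(1)] idem_set_subset[of R'] by blast
      with y idem_iff show "y \<in> h ` idem_set R" by blast
    qed
  qed
  then show ?thesis
    using rack_iso_restr[OF h idem_set_subset] by (simp add: idem_part_def)
qed

lemma idem_part_restr: "S \<subseteq> fst R \<Longrightarrow> idem_part (restr R S) = restr (idem_part R) (idem_set R \<inter> S)"
proof -
  assume "S \<subseteq> fst R"
  then have "idem_set (restr R S) = idem_set R \<inter> S" by (auto simp: idem_set_def)
  then show ?thesis by (simp add: idem_part_def restr_restr)
qed

lemma subrack_idem_part:
  assumes R: "R \<in> FinRacks" and S: "subrack R S"
  shows "subrack (idem_part R) (idem_set R \<inter> S)"
proof -
  have fin: "finite (fst R)" and rack: "rack_on (fst R) (snd R)" using R by (auto simp: FinRacks_iff)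
  have "snd R s ` (idem_set R \<inter> S) = idem_set R \<inter> S" if s: "s \<in> idem_set R \<inter> S" for s
  proof (rule endo_inj_surj)
    show "finite (idem_set R \<inter> S)" using fin idem_set_subset finite_subset by blast
    have "snd R s ` S = S" using S s by (simp add: subrack_def)
    then show "snd R s ` (idem_set R \<inter> S) \<subseteq> idem_set R \<inter> S"
      using idem_set_closed[OF rack] s by blast
    show "inj_on (snd R s) (idem_set R \<inter> S)"
      using s idem_set_subset[of R] by (intro inj_on_subset[OF rack_on_inj[OF rack]]) auto
  qed
  then show ?thesis by (auto simp: subrack_def idem_part_def)
qed

lemma decomposes_idem_part:
  assumes "R \<in> FinRacks" "decomposes R S"
  shows "decomposes (idem_part R) (idem_set R \<inter> S)"
proof -
  have "subrack (idem_part R) (idem_set R \<inter> S)" "subrack (idem_part R) (idem_set R \<inter> (fst R - S))"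
    using assms subrack_idem_part by (auto simp: decomposes_def)
  moreover have "fst (idem_part R) - idem_set R \<inter> S = idem_set R \<inter> (fst R - S)"
    using idem_set_subset[of R] by (auto simp: idem_part_def)
  ultimately show ?thesis unfolding decomposes_def by (simp only:)
qed

lemma idem_part_rack_prod: "idem_part (rack_prod X Y) = rack_prod (idem_part X) (idem_part Y)"
proof -
  have "u \<in> idem_set (rack_prod X Y) \<longleftrightarrow> u \<in> prod_encode ` (idem_set X \<times> idem_set Y)" for u
  proof (cases "u \<in> fst (rack_prod X Y)")
    case True
    then obtain a b where "u = prod_encode (a, b)" "a \<in> fst X" "b \<in> fst Y" by auto
    then show ?thesis
      by (simp add: idem_set_def inj_image_mem_iff[OF inj_prod_encode])
  qed (auto simp: idem_set_def)
  then have "idem_set (rack_prod X Y) = prod_encode ` (idem_set X \<times> idem_set Y)" by blast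
  then show ?thesis
    by (simp add: idem_part_def restr_rack_prod idem_set_subset)
qed

lemma idem_push_gen [simp]: "idem_push (gen R) = gen (idem_part R)"
  by (simp add: idem_push_def)

lemma idem_push_free_ab: "f \<in> free_ab FinRacks \<Longrightarrow> idem_push f \<in> free_ab FinQuandles"
  using supp_lin_ext[of "\<lambda>R. gen (idem_part R)" f] idem_part_FinQuandles
  by (fastforce simp: free_ab_iff idem_push_def)

lemma idem_push_rels:
  assumes "r \<in> rels FinRacks"
  shows "idem_push r \<in> rels FinQuandles"
  using assms
proof (cases rule: relsE)
  case (iso x y)
  then show ?thesis
    by (simp add: idem_push_def additive_diff[OF additive_lin_ext] rels_isoI idem_part_FinQuandles
        rack_iso_idem_part FinRacks_iff)
next
  case (decomp R S)
  have "S \<subseteq> fst R" using decomp by (simp add: decomposes_def subrack_def)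
  moreover have "fst (idem_part R) - idem_set R \<inter> S = idem_set R \<inter> (fst R - S)"
    using idem_set_subset[of R] by (auto simp: idem_part_def)
  ultimately have "idem_push r = decomp_rel (idem_part R) (idem_set R \<inter> S)"
    using decomp by (simp add: decomp_rel_def idem_push_def additive_diff[OF additive_lin_ext] idem_part_restr)
  then show ?thesis
    using decomp by (simp add: rels_decompI idem_part_FinQuandles decomposes_idem_part)
qed

lemma idem_push_conv:
  assumes "fin_supp f" "fin_supp g"
  shows "idem_push (conv f g) = conv (idem_push f) (idem_push g)"
  using assms
  by (simp add: idem_push_def conv_lin_ext_left lin_ext_lin_ext idem_part_rack_prod)

lemma idem_push_quandle:
  assumes "f \<in> free_ab FinQuandles"
  shows "idem_push f = f"
proof -
  have "idem_push f = lin_ext gen f"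
    unfolding idem_push_def using assms by (intro lin_ext_cong) (auto simp: free_ab_iff idem_part_quandle)
  then show ?thesis using assms by (simp add: free_ab_iff lin_ext_gen_id)
qed

lemma unit_rack_FinQuandles: "unit_rack \<in> FinQuandles"
  by (auto simp: FinQuandles_def unit_rack_def quandle_on_def rack_on_def normalised_def bij_betw_def)

lemma additive_idem_push: "additive idem_push"
  unfolding idem_push_def by (rule additive_lin_ext)

lemma Burnside_map_inclusion: "Burnside_map FinQuandles FinRacks (\<lambda>f. f)"
proof
  show "f \<in> free_ab FinRacks" if "f \<in> free_ab FinQuandles" for f
    using that FinQuandles_iff by (auto simp: free_ab_iff)
  show "r \<in> relsub FinRacks" if "r \<in> rels FinQuandles" for r
    using that relsub_mono[of FinQuandles FinRacks] FinQuandles_iff relsub_rels by blast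
qed (simp_all add: product_closed_FinQuandles product_closed_FinRacks additive_def unit_rack_FinQuandles)

lemma Burnside_map_idem_push: "Burnside_map FinRacks FinQuandles idem_push"
proof
  show "unit_rack \<in> FinRacks" using unit_rack_FinQuandles FinQuandles_iff by blast
  show "idem_push (gen unit_rack) = gen unit_rack"
    using unit_rack_FinQuandles by (simp add: idem_part_quandle)
  show "idem_push (conv f g) = conv (idem_push f) (idem_push g)"
    if "f \<in> free_ab FinRacks" "g \<in> free_ab FinRacks" for f g
    using that by (simp add: free_ab_iff idem_push_conv)
qed (simp_all add: product_closed_FinQuandles product_closed_FinRacks additive_idem_push
    idem_push_free_ab idem_push_rels relsub_rels)

theorem proposition3p18:
  shows "\<exists>\<phi> \<psi>. \<phi> \<in> ring_hom B_Q B_R \<and> \<psi> \<in> ring_hom B_R B_Q \<and>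
           (\<forall>x\<in>carrier B_Q. \<psi> (\<phi> x) = x)"
proof -
  interpret inclusion: Burnside_map FinQuandles FinRacks "\<lambda>f. f"
    by (rule Burnside_map_inclusion)
  interpret idem: Burnside_map FinRacks FinQuandles idem_push
    by (rule Burnside_map_idem_push)
  have "idem.induced (inclusion.induced X) = X" if X: "X \<in> carrier B_Q" for X
  proof -
    obtain f where f: "f \<in> free_ab FinQuandles" "X = cls FinQuandles f"
      using X by (auto simp: carrier_Burnside)
    then have "f \<in> free_ab FinRacks" using inclusion.free_ab_image by simp
    with f show ?thesis by (simp add: inclusion.induced_cls idem.induced_cls idem_push_quandle)
  qed
  then show ?thesis using inclusion.induced_ring_hom idem.induced_ring_hom by blast
qed

end
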